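(* Let $T$ be a linear operator in $H$ and $V\subset\operatorname{dom}(T)$ a finite-dimensional subspace. Then for given $\lambda\in W_{e1}(T)$ and $\varepsilon>0$ there exist $x\in V^\perp\cap\operatorname{dom}(T)$ with $\|x\|=1$ and $\mu\in\mathbb C$ with $|\mu-\lambda|<\varepsilon$ such that \[ T_{V_x}=\begin{pmatrix}T_V&A\\0&\mu I\end{pmatrix}\quad\text{in } V_x:=V\oplus\operatorname{span}\{x\} \] for some linear operator $A:\operatorname{span}\{x\}\to V$; consequently $\sigma(T_{V_x})=\sigma(T_V)\cup\{\mu\}$. Moreover, one can choose $A=0$ if $\overline{\operatorname{dom}(T)}=H$ and $\operatorname{dom}(T)\subset\operatorname{dom}(T^* )$, and one can choose $\mu=\lambda$ if $\lambda\in\operatorname{int}W_{e1}(T)$.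
   Context: $H$ is a separable infinite-dimensional complex Hilbert space. $W(S)=\{\langle Sx,x\rangle:x\in\operatorname{dom}(S),\|x\|=1\}$. $W_{e1}(T):=\bigcap_{U}\overline{W(T|_{U^\perp\cap\operatorname{dom}(T)})}$, the intersection over all finite-dimensional subspaces $U\subset H$, where $T|_M$ denotes restriction to $M$. For a closed subspace $W\subset\operatorname{dom}(T)$, $P_W$ is the orthogonal projection onto $W$ and $T_W:=P_WT|_W$ is the compression of $T$ to $W$. *)

theory Defs
  imports "HOL-Analysis.Analysis"
begin

text \<open>Model of the separable infinite-dimensional complex Hilbert space H:
  the sequence space l2(N; C). Vectors are functions nat => complex.\<close>

type_synonym vec = "nat \<Rightarrow> complex"

definition l2 :: "vec set" where
  "l2 = {x. summable (\<lambda>n. (cmod (x n))\<^sup>2)}"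

definition vadd :: "vec \<Rightarrow> vec \<Rightarrow> vec" where
  "vadd x y = (\<lambda>n. x n + y n)"

definition vsub :: "vec \<Rightarrow> vec \<Rightarrow> vec" where
  "vsub x y = (\<lambda>n. x n - y n)"

definition vscale :: "complex \<Rightarrow> vec \<Rightarrow> vec" where
  "vscale c x = (\<lambda>n. c * x n)"

definition vzero :: vec where
  "vzero = (\<lambda>n. 0)"

definition l2inner :: "vec \<Rightarrow> vec \<Rightarrow> complex" where
  "l2inner x y = (\<Sum>n. x n * cnj (y n))"

definition l2norm :: "vec \<Rightarrow> real" where
  "l2norm x = sqrt (\<Sum>n. (cmod (x n))\<^sup>2)"

definition lin_subspace :: "vec set \<Rightarrow> bool" where
  "lin_subspace S \<longleftrightarrow> S \<subseteq> l2 \<and> vzero \<in> S \<and>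
     (\<forall>x\<in>S. \<forall>y\<in>S. vadd x y \<in> S) \<and> (\<forall>c. \<forall>x\<in>S. vscale c x \<in> S)"

definition fspan :: "vec set \<Rightarrow> vec set" where
  "fspan B = {(\<lambda>n. \<Sum>b\<in>B. c b * b n) | c. True}"

definition fin_dim_subspace :: "vec set \<Rightarrow> bool" where
  "fin_dim_subspace U \<longleftrightarrow> (\<exists>B. finite B \<and> B \<subseteq> l2 \<and> U = fspan B)"

text \<open>A linear operator in H with domain D: D a linear subspace, T linear on D
  with values in H (values of T outside D are irrelevant).\<close>
definition lin_op :: "vec set \<Rightarrow> (vec \<Rightarrow> vec) \<Rightarrow> bool" where
  "lin_op D T \<longleftrightarrow> lin_subspace D \<and> (\<forall>x\<in>D. T x \<in> l2) \<and>
     (\<forall>x\<in>D. \<forall>y\<in>D. T (vadd x y) = vadd (T x) (T y)) \<and>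
     (\<forall>c. \<forall>x\<in>D. T (vscale c x) = vscale c (T x))"

definition orth :: "vec set \<Rightarrow> vec set" where
  "orth U = {x\<in>l2. \<forall>u\<in>U. l2inner x u = 0}"

definition numrange :: "(vec \<Rightarrow> vec) \<Rightarrow> vec set \<Rightarrow> complex set" where
  "numrange T M = {l2inner (T x) x | x. x \<in> M \<and> l2norm x = 1}"

definition We1 :: "vec set \<Rightarrow> (vec \<Rightarrow> vec) \<Rightarrow> complex set" where
  "We1 D T = \<Inter> {closure (numrange T (orth U \<inter> D)) | U. fin_dim_subspace U}"

definition proj :: "vec set \<Rightarrow> vec \<Rightarrow> vec" where
  "proj W y = (THE w. w \<in> W \<and> (\<forall>u\<in>W. l2inner (vsub y w) u = 0))"

definition compress :: "(vec \<Rightarrow> vec) \<Rightarrow> vec set \<Rightarrow> vec \<Rightarrow> vec" where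
  "compress T W v = proj W (T v)"

definition fd_spectrum :: "vec set \<Rightarrow> (vec \<Rightarrow> vec) \<Rightarrow> complex set" where
  "fd_spectrum W S = {l. \<not> bij_betw (\<lambda>v. vsub (S v) (vscale l v)) W W}"

definition ext_span :: "vec set \<Rightarrow> vec \<Rightarrow> vec set" where
  "ext_span V x = {vadd v (vscale c x) | v c. v \<in> V}"

definition dense_in_H :: "vec set \<Rightarrow> bool" where
  "dense_in_H D \<longleftrightarrow> (\<forall>y\<in>l2. \<forall>e>0. \<exists>x\<in>D. l2norm (vsub x y) < e)"

definition adj_dom :: "vec set \<Rightarrow> (vec \<Rightarrow> vec) \<Rightarrow> vec set" where
  "adj_dom D T = {y\<in>l2. \<exists>z\<in>l2. \<forall>x\<in>D. l2inner (T x) y = l2inner x z}"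

text \<open>The block form  T_{V_x} = [[T_V, A],[0, mu I]]  in V_x = V (+) span{x},
  with A : span{x} -> V linear.\<close>
definition block_form :: "(vec \<Rightarrow> vec) \<Rightarrow> vec set \<Rightarrow> vec \<Rightarrow> complex \<Rightarrow> (vec \<Rightarrow> vec) \<Rightarrow> bool" where
  "block_form T V x \<mu> A \<longleftrightarrow>
     (\<forall>y\<in>fspan {x}. A y \<in> V) \<and>
     (\<forall>y\<in>fspan {x}. \<forall>z\<in>fspan {x}. A (vadd y z) = vadd (A y) (A z)) \<and>
     (\<forall>c. \<forall>y\<in>fspan {x}. A (vscale c y) = vscale c (A y)) \<and>
     (\<forall>v\<in>V. \<forall>y\<in>fspan {x}.
        compress T (ext_span V x) (vadd v y) = vadd (vadd (compress T V v) (A y)) (vscale \<mu> y))"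

end

theory Submission imports Defs begin

text \<open>
  Write V = span B. Since lam lies in the closure of the numerical range of T restricted to
  the orthogonal complement of any finite set of vectors, there is a unit vector x in dom T
  orthogonal to B and to T B with <Tx,x> within eps of lam. Then T maps V into a space
  orthogonal to x, so the compression of T to V (+) span{x} is block upper triangular with
  diagonal blocks T_V and mu = <Tx,x>, and a block triangular operator is bijective iff its
  diagonal blocks are; this gives the spectrum. If V lies in dom T*, choosing x orthogonal
  also to T* B makes Tx orthogonal to V, which kills the off-diagonal block. For lam in the
  interior of W_e1(T), convexity of numerical ranges (Toeplitz-Hausdorff) shows that the
  interior of the closure of the numerical range lies in the range itself, so mu = lam can
  be attained exactly.
\<close>

section \<open>The Hilbert space l2\<close>

lemmas vec_defs = vadd_def vsub_def vscale_def vzero_def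

lemma vsub_eq_vadd_vscale: "vsub x y = vadd x (vscale (-1) y)"
  by (simp add: vec_defs)

lemma vadd_vzero_right [simp]: "vadd v vzero = v"
  by (simp add: vec_defs)

lemma vadd_vscale_0 [simp]: "vadd v (vscale 0 x) = v"
  by (simp add: vec_defs)

lemma vzero_in_l2: "vzero \<in> l2"
  by (simp add: l2_def vzero_def)

lemma vscale_in_l2: "x \<in> l2 \<Longrightarrow> vscale c x \<in> l2"
  unfolding l2_def vscale_def
  by (simp add: norm_mult power_mult_distrib summable_mult)

lemma vadd_in_l2:
  assumes "x \<in> l2" "y \<in> l2" shows "vadd x y \<in> l2"
proof -
  have bound: "(cmod (a + b))\<^sup>2 \<le> 2 * (cmod a)\<^sup>2 + 2 * (cmod b)\<^sup>2" for a b :: complex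
  proof -
    have "(cmod (a + b))\<^sup>2 \<le> (cmod a + cmod b)\<^sup>2"
      by (simp add: norm_triangle_ineq power_mono)
    also have "\<dots> \<le> 2 * (cmod a)\<^sup>2 + 2 * (cmod b)\<^sup>2"
      using sum_squares_bound[of "cmod a" "cmod b"] by (simp add: power2_sum)
    finally show ?thesis .
  qed
  have "summable (\<lambda>n. 2 * (cmod (x n))\<^sup>2 + 2 * (cmod (y n))\<^sup>2)"
    using assms unfolding l2_def by (auto intro: summable_add summable_mult)
  then show ?thesis
    unfolding l2_def vadd_def by (simp add: summable_comparison_test'[where N = 0] bound)
qed

lemma vsub_in_l2: "x \<in> l2 \<Longrightarrow> y \<in> l2 \<Longrightarrow> vsub x y \<in> l2"
  by (simp add: vsub_eq_vadd_vscale vadd_in_l2 vscale_in_l2)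

lemma summable_l2inner:
  assumes "x \<in> l2" "y \<in> l2" shows "summable (\<lambda>n. x n * cnj (y n))"
proof (rule summable_comparison_test')
  show "summable (\<lambda>n. (cmod (x n))\<^sup>2 + (cmod (y n))\<^sup>2)"
    using assms unfolding l2_def by (auto intro: summable_add)
  show "norm (x n * cnj (y n)) \<le> (cmod (x n))\<^sup>2 + (cmod (y n))\<^sup>2" for n
    using sum_squares_bound[of "cmod (x n)" "cmod (y n)"]
      mult_nonneg_nonneg[OF norm_ge_zero norm_ge_zero, of "x n" "y n"]
    unfolding norm_mult complex_mod_cnj by linarith
qed

lemma l2inner_sums: "x \<in> l2 \<Longrightarrow> y \<in> l2 \<Longrightarrow> (\<lambda>n. x n * cnj (y n)) sums l2inner x y"
  unfolding l2inner_def by (intro summable_sums summable_l2inner)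

lemma l2inner_add_left:
  "x \<in> l2 \<Longrightarrow> y \<in> l2 \<Longrightarrow> z \<in> l2 \<Longrightarrow> l2inner (vadd x y) z = l2inner x z + l2inner y z"
  using sums_add[OF l2inner_sums[of x z] l2inner_sums[of y z]]
  by (simp add: l2inner_def vadd_def distrib_right sums_iff)

lemma l2inner_scale_left:
  "x \<in> l2 \<Longrightarrow> z \<in> l2 \<Longrightarrow> l2inner (vscale c x) z = c * l2inner x z"
  using sums_mult[OF l2inner_sums[of x z], of c]
  by (simp add: l2inner_def vscale_def mult.assoc sums_iff)

lemma l2inner_commute: "x \<in> l2 \<Longrightarrow> y \<in> l2 \<Longrightarrow> l2inner y x = cnj (l2inner x y)"
  using sums_cnj[THEN iffD2, OF l2inner_sums[of x y]]
  by (simp add: l2inner_def mult.commute sums_iff)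

lemma l2inner_add_right:
  "x \<in> l2 \<Longrightarrow> y \<in> l2 \<Longrightarrow> z \<in> l2 \<Longrightarrow> l2inner z (vadd x y) = l2inner z x + l2inner z y"
  by (simp add: l2inner_commute[of _ z] vadd_in_l2 l2inner_add_left)

lemma l2inner_scale_right:
  "x \<in> l2 \<Longrightarrow> z \<in> l2 \<Longrightarrow> l2inner z (vscale c x) = cnj c * l2inner z x"
  by (simp add: l2inner_commute[of _ z] vscale_in_l2 l2inner_scale_left)

lemma l2inner_sub_left:
  "x \<in> l2 \<Longrightarrow> y \<in> l2 \<Longrightarrow> z \<in> l2 \<Longrightarrow> l2inner (vsub x y) z = l2inner x z - l2inner y z"
  by (simp add: vsub_eq_vadd_vscale l2inner_add_left l2inner_scale_left vscale_in_l2)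

lemma l2inner_zero_left: "l2inner vzero z = 0"
  by (simp add: l2inner_def vzero_def)

lemma l2inner_zero_right: "l2inner z vzero = 0"
  by (simp add: l2inner_def vzero_def)

lemma l2inner_self: "x \<in> l2 \<Longrightarrow> l2inner x x = of_real ((l2norm x)\<^sup>2)"
proof -
  assume x: "x \<in> l2"
  then have "(\<lambda>n. complex_of_real ((cmod (x n))\<^sup>2)) sums of_real (\<Sum>n. (cmod (x n))\<^sup>2)"
    unfolding l2_def by (intro sums_of_real summable_sums) simp
  then have "(\<lambda>n. x n * cnj (x n)) sums of_real (\<Sum>n. (cmod (x n))\<^sup>2)"
    by (simp only: complex_norm_square)
  moreover have "(\<Sum>n. (cmod (x n))\<^sup>2) \<ge> 0"
    using x unfolding l2_def by (intro suminf_nonneg) auto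
  ultimately show ?thesis
    by (simp add: l2inner_def l2norm_def sums_iff)
qed

lemma l2inner_self_eq_0_iff: "x \<in> l2 \<Longrightarrow> l2inner x x = 0 \<longleftrightarrow> x = vzero"
proof
  assume x: "x \<in> l2" and "l2inner x x = 0"
  then have "(\<Sum>n. (cmod (x n))\<^sup>2) = 0"
    by (simp add: l2inner_self l2norm_def)
  with x have "\<forall>n. (cmod (x n))\<^sup>2 = 0"
    unfolding l2_def by (subst (asm) suminf_eq_zero_iff) auto
  then show "x = vzero" by (simp add: vzero_def fun_eq_iff)
qed (simp add: l2inner_def vzero_def)

lemma l2norm_eq_1_iff: "x \<in> l2 \<Longrightarrow> l2norm x = 1 \<longleftrightarrow> l2inner x x = 1"
proof -
  assume x: "x \<in> l2"
  have "l2norm x \<ge> 0"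
    using x unfolding l2norm_def l2_def by (auto intro!: suminf_nonneg)
  then show ?thesis
    using x by (auto simp: l2inner_self power2_eq_1_iff complex_eq_iff)
qed

section \<open>Subspaces and finite spans\<close>

lemma lin_subspace_l2: "lin_subspace l2"
  by (simp add: lin_subspace_def vzero_in_l2 vadd_in_l2 vscale_in_l2)

lemma lin_subspace_vsub: "lin_subspace S \<Longrightarrow> x \<in> S \<Longrightarrow> y \<in> S \<Longrightarrow> vsub x y \<in> S"
  by (simp add: lin_subspace_def vsub_eq_vadd_vscale)

lemma lin_subspace_Int: "lin_subspace A \<Longrightarrow> lin_subspace B \<Longrightarrow> lin_subspace (A \<inter> B)"
  by (auto simp: lin_subspace_def)

lemma lin_subspace_orth: "U \<subseteq> l2 \<Longrightarrow> lin_subspace (orth U)"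
  by (auto simp: lin_subspace_def orth_def vzero_in_l2 vadd_in_l2 vscale_in_l2
      l2inner_zero_left l2inner_add_left l2inner_scale_left subset_iff)

lemma fspan_empty: "fspan {} = {vzero}"
  by (simp add: fspan_def vzero_def)

lemma fspan_insert:
  assumes "finite B" "b \<notin> B"
  shows "fspan (insert b B) = ext_span (fspan B) b"
proof (intro set_eqI iffI)
  fix v assume "v \<in> fspan (insert b B)"
  then obtain c where v: "v = (\<lambda>n. \<Sum>b'\<in>insert b B. c b' * b' n)" by (auto simp: fspan_def)
  have "v = vadd (\<lambda>n. \<Sum>b'\<in>B. c b' * b' n) (vscale (c b) b)"
    using assms by (simp add: v vec_defs fun_eq_iff)
  then show "v \<in> ext_span (fspan B) b" by (auto simp: ext_span_def fspan_def)
next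
  fix v assume "v \<in> ext_span (fspan B) b"
  then obtain t c where v: "v = vadd (\<lambda>n. \<Sum>b'\<in>B. c b' * b' n) (vscale t b)"
    by (auto simp: ext_span_def fspan_def)
  have "(\<Sum>b'\<in>B. (c(b := t)) b' * b' n) = (\<Sum>b'\<in>B. c b' * b' n)" for n
    using assms(2) by (intro sum.cong) auto
  then have "v = (\<lambda>n. \<Sum>b'\<in>insert b B. (c(b := t)) b' * b' n)"
    using assms by (simp add: v vec_defs fun_eq_iff)
  then show "v \<in> fspan (insert b B)" by (auto simp: fspan_def)
qed

lemma lin_subspace_fspan:
  assumes "finite B" "B \<subseteq> l2" shows "lin_subspace (fspan B)"
proof -
  have "fspan B \<subseteq> l2"
    using assms by (induction B rule: finite_induct)
      (auto simp: fspan_empty fspan_insert ext_span_def vzero_in_l2 vadd_in_l2 vscale_in_l2)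
  moreover have "vzero \<in> fspan B"
    by (auto simp: fspan_def vzero_def intro!: exI[of _ "\<lambda>_. 0"])
  moreover have "vadd x y \<in> fspan B" if xy: "x \<in> fspan B" "y \<in> fspan B" for x y
  proof -
    obtain c d where "x = (\<lambda>n. \<Sum>b\<in>B. c b * b n)" "y = (\<lambda>n. \<Sum>b\<in>B. d b * b n)"
      using xy by (auto simp: fspan_def)
    then have "vadd x y = (\<lambda>n. \<Sum>b\<in>B. (c b + d b) * b n)"
      by (simp add: vadd_def sum.distrib distrib_right)
    then show ?thesis by (auto simp: fspan_def)
  qed
  moreover have "vscale k x \<in> fspan B" if x: "x \<in> fspan B" for k x
  proof -
    obtain c where "x = (\<lambda>n. \<Sum>b\<in>B. c b * b n)" using x by (auto simp: fspan_def)
    then have "vscale k x = (\<lambda>n. \<Sum>b\<in>B. (k * c b) * b n)"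
      by (simp add: vscale_def sum_distrib_left mult.assoc)
    then show ?thesis by (auto simp: fspan_def)
  qed
  ultimately show ?thesis by (simp add: lin_subspace_def)
qed

lemma fspan_subset:
  assumes "finite B" "lin_subspace S" "B \<subseteq> S"
  shows "fspan B \<subseteq> S"
  using assms(1,3) assms(2)[unfolded lin_subspace_def]
  by (induction B rule: finite_induct) (auto simp: fspan_empty fspan_insert ext_span_def)

lemma fspan_superset:
  assumes "finite B" shows "B \<subseteq> fspan B"
proof
  fix b assume b: "b \<in> B"
  have "(\<Sum>b'\<in>B. (if b' = b then 1 else 0) * b' n) = b n" for n
  proof -
    have "(\<Sum>b'\<in>B. (if b' = b then 1 else 0) * b' n) = (\<Sum>b'\<in>B. if b' = b then b n else 0)"
      by (rule sum.cong) auto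
    then show ?thesis using assms b by simp
  qed
  then have "b = (\<lambda>n. \<Sum>b'\<in>B. (if b' = b then 1 else 0) * b' n)"
    by (intro ext) (simp only:)
  then show "b \<in> fspan B" by (auto simp: fspan_def)
qed

lemma fspan_singleton: "fspan {x} = {vscale c x | c. True}"
  by (auto simp: fspan_def vscale_def)

lemma orth_antimono: "A \<subseteq> B \<Longrightarrow> orth B \<subseteq> orth A"
  by (auto simp: orth_def)

lemma orth_fspan:
  assumes "finite B" "B \<subseteq> l2" shows "orth (fspan B) = orth B"
proof
  show "orth (fspan B) \<subseteq> orth B"
    using assms(1) by (intro orth_antimono fspan_superset)
  show "orth B \<subseteq> orth (fspan B)"
  proof
    fix x assume x: "x \<in> orth B"
    then have "lin_subspace {u \<in> l2. l2inner x u = 0}"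
      by (auto simp: lin_subspace_def orth_def vzero_in_l2 vadd_in_l2 vscale_in_l2
          l2inner_zero_right l2inner_add_right l2inner_scale_right)
    moreover have "B \<subseteq> {u \<in> l2. l2inner x u = 0}"
      using x assms(2) by (auto simp: orth_def)
    ultimately show "x \<in> orth (fspan B)"
      using x fspan_subset[OF assms(1)] by (fastforce simp: orth_def)
  qed
qed

lemma lin_op_dom: "lin_op D T \<Longrightarrow> lin_subspace D"
  by (simp add: lin_op_def)

lemma lin_op_in_l2: "lin_op D T \<Longrightarrow> x \<in> D \<Longrightarrow> T x \<in> l2"
  by (simp add: lin_op_def)

lemma lin_op_add: "lin_op D T \<Longrightarrow> x \<in> D \<Longrightarrow> y \<in> D \<Longrightarrow> T (vadd x y) = vadd (T x) (T y)"
  by (simp add: lin_op_def)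

lemma lin_op_scale: "lin_op D T \<Longrightarrow> x \<in> D \<Longrightarrow> T (vscale c x) = vscale c (T x)"
  by (simp add: lin_op_def)

lemma lin_op_vzero: "lin_op D T \<Longrightarrow> T vzero = vzero"
  using lin_op_scale[of D T vzero 0] by (simp add: lin_op_def lin_subspace_def vec_defs)

lemma image_fspan_subset:
  assumes T: "lin_op D T" and B: "finite B" "fspan B \<subseteq> D"
  shows "T ` fspan B \<subseteq> fspan (T ` B)"
proof -
  have BD: "B \<subseteq> D" using B fspan_superset by blast
  have TB: "finite (T ` B)" "T ` B \<subseteq> l2" using B(1) BD lin_op_in_l2[OF T] by auto
  have "lin_subspace {v \<in> D. T v \<in> fspan (T ` B)}"
    using lin_op_dom[OF T] lin_subspace_fspan[OF TB] lin_op_vzero[OF T]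
    by (auto simp: lin_subspace_def lin_op_add[OF T] lin_op_scale[OF T])
  moreover have "B \<subseteq> {v \<in> D. T v \<in> fspan (T ` B)}"
    using BD fspan_superset[OF TB(1)] by auto
  ultimately show ?thesis using fspan_subset[OF B(1)] by blast
qed

section \<open>Orthogonal projections\<close>

lemma proj_eqI:
  assumes W: "lin_subspace W" and y: "y \<in> l2" and w: "w \<in> W"
    and orth: "\<forall>u\<in>W. l2inner (vsub y w) u = 0"
  shows "proj W y = w"
  unfolding proj_def
proof (rule the_equality)
  show "w \<in> W \<and> (\<forall>u\<in>W. l2inner (vsub y w) u = 0)" using w orth by simp
  fix w' assume w': "w' \<in> W \<and> (\<forall>u\<in>W. l2inner (vsub y w') u = 0)"
  have l2: "w \<in> l2" "w' \<in> l2" using W w w' by (auto simp: lin_subspace_def)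
  have d: "vsub w' w \<in> W" using W w w' lin_subspace_vsub by blast
  have eq: "vsub w' w = vsub (vsub y w) (vsub y w')" by (simp add: vec_defs fun_eq_iff)
  have "l2inner (vsub w' w) (vsub w' w)
      = l2inner (vsub y w) (vsub w' w) - l2inner (vsub y w') (vsub w' w)"
    by (subst (1) eq) (simp add: l2inner_sub_left vsub_in_l2 y l2)
  also have "\<dots> = 0" using w' orth d by simp
  finally have "vsub w' w = vzero" using l2inner_self_eq_0_iff vsub_in_l2[OF l2(2,1)] by simp
  then show "w' = w" by (simp add: vec_defs fun_eq_iff)
qed

text \<open>Since proj is a definite description, it is meaningful only on subspaces onto which
  every vector of l2 has an orthogonal projection.\<close>

definition has_orth_proj :: "vec set \<Rightarrow> bool" where
  "has_orth_proj W \<longleftrightarrow> lin_subspace W \<and> (\<forall>y\<in>l2. \<exists>w\<in>W. \<forall>u\<in>W. l2inner (vsub y w) u = 0)"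

lemma proj_spec:
  assumes "has_orth_proj W" "y \<in> l2"
  shows "proj W y \<in> W \<and> (\<forall>u\<in>W. l2inner (vsub y (proj W y)) u = 0)"
proof -
  obtain w where "w \<in> W" "\<forall>u\<in>W. l2inner (vsub y w) u = 0"
    using assms by (auto simp: has_orth_proj_def)
  moreover from this have "proj W y = w"
    using assms by (intro proj_eqI) (auto simp: has_orth_proj_def)
  ultimately show ?thesis by simp
qed

lemmas proj_in = proj_spec[THEN conjunct1]
  and proj_orth = proj_spec[THEN conjunct2]

lemma has_orth_proj_l2: "has_orth_proj W \<Longrightarrow> W \<subseteq> l2"
  by (simp add: has_orth_proj_def lin_subspace_def)

lemma proj_add:
  assumes W: "has_orth_proj W" and y: "y \<in> l2" and z: "z \<in> l2"
  shows "proj W (vadd y z) = vadd (proj W y) (proj W z)"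
proof (rule proj_eqI)
  have "lin_subspace W" using W by (simp add: has_orth_proj_def)
  then show "lin_subspace W" "vadd (proj W y) (proj W z) \<in> W"
    using proj_in[OF W y] proj_in[OF W z] by (auto simp: lin_subspace_def)
  show "vadd y z \<in> l2" using y z by (rule vadd_in_l2)
  have "vsub (vadd y z) (vadd (proj W y) (proj W z)) = vadd (vsub y (proj W y)) (vsub z (proj W z))"
    by (simp add: vec_defs fun_eq_iff)
  then show "\<forall>u\<in>W. l2inner (vsub (vadd y z) (vadd (proj W y) (proj W z))) u = 0"
    using proj_spec[OF W y] proj_spec[OF W z] has_orth_proj_l2[OF W] y z
    by (auto simp: l2inner_add_left vsub_in_l2 subset_iff)
qed

lemma proj_scale:
  assumes W: "has_orth_proj W" and y: "y \<in> l2"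
  shows "proj W (vscale c y) = vscale c (proj W y)"
proof (rule proj_eqI)
  have "lin_subspace W" using W by (simp add: has_orth_proj_def)
  then show "lin_subspace W" "vscale c (proj W y) \<in> W"
    using proj_in[OF W y] by (auto simp: lin_subspace_def)
  show "vscale c y \<in> l2" using y by (rule vscale_in_l2)
  have "vsub (vscale c y) (vscale c (proj W y)) = vscale c (vsub y (proj W y))"
    by (simp add: vec_defs fun_eq_iff algebra_simps)
  then show "\<forall>u\<in>W. l2inner (vsub (vscale c y) (vscale c (proj W y))) u = 0"
    using proj_spec[OF W y] has_orth_proj_l2[OF W] y
    by (auto simp: l2inner_scale_left vsub_in_l2 subset_iff)
qed

lemma proj_eq_vzero: "has_orth_proj W \<Longrightarrow> y \<in> orth W \<Longrightarrow> proj W y = vzero"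
  by (rule proj_eqI) (auto simp: has_orth_proj_def orth_def lin_subspace_def vsub_def vzero_def)

lemma lin_subspace_ext_span:
  assumes V: "lin_subspace V" and x: "x \<in> l2"
  shows "lin_subspace (ext_span V x)"
proof -
  have "ext_span V x \<subseteq> l2"
    using V x by (auto simp: ext_span_def lin_subspace_def vadd_in_l2 vscale_in_l2)
  moreover have "vzero \<in> ext_span V x"
    using V unfolding ext_span_def lin_subspace_def
    by (auto intro!: exI[of _ vzero] exI[of _ 0] simp: vec_defs)
  moreover have "vadd a b \<in> ext_span V x" if ab: "a \<in> ext_span V x" "b \<in> ext_span V x" for a b
  proof -
    obtain v c v' c' where "v \<in> V" "v' \<in> V" "a = vadd v (vscale c x)" "b = vadd v' (vscale c' x)"
      using ab unfolding ext_span_def by blast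
    moreover from this have "vadd a b = vadd (vadd v v') (vscale (c + c') x)"
      by (simp add: vec_defs fun_eq_iff algebra_simps)
    ultimately show ?thesis using V by (auto simp: ext_span_def lin_subspace_def)
  qed
  moreover have "vscale k a \<in> ext_span V x" if a: "a \<in> ext_span V x" for k a
  proof -
    obtain v c where "v \<in> V" "a = vadd v (vscale c x)"
      using a unfolding ext_span_def by blast
    moreover from this have "vscale k a = vadd (vscale k v) (vscale (k * c) x)"
      by (simp add: vec_defs fun_eq_iff algebra_simps)
    ultimately show ?thesis using V by (auto simp: ext_span_def lin_subspace_def)
  qed
  ultimately show ?thesis by (simp add: lin_subspace_def)
qed

text \<open>The vector x need not be normalised, nor even nonzero: for x = vzero the coefficient
  is 0 / 0 = 0 and the formula degenerates correctly to proj V y.\<close>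

lemma ext_span_orth_decomp:
  assumes V: "has_orth_proj V" and x: "x \<in> orth V" and y: "y \<in> l2"
  defines "w \<equiv> vadd (proj V y) (vscale (l2inner y x / l2inner x x) x)"
  shows "w \<in> ext_span V x \<and> (\<forall>u\<in>ext_span V x. l2inner (vsub y w) u = 0)"
proof
  define k where "k = l2inner y x / l2inner x x"
  have Vl2: "V \<subseteq> l2" using V by (rule has_orth_proj_l2)
  have xl2: "x \<in> l2" and xV: "\<forall>v\<in>V. l2inner x v = 0" using x by (auto simp: orth_def)
  have P: "proj V y \<in> V" "proj V y \<in> l2" using proj_in[OF V y] Vl2 by auto
  show "w \<in> ext_span V x" using P(1) by (auto simp: w_def ext_span_def)
  have r: "vsub y w = vsub (vsub y (proj V y)) (vscale k x)"
    by (simp add: w_def k_def vec_defs fun_eq_iff)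
  have rl2: "vsub y w \<in> l2" using y P xl2 by (simp add: r vsub_in_l2 vscale_in_l2)
  have rV: "l2inner (vsub y w) v = 0" if "v \<in> V" for v
    using that proj_orth[OF V y] xV y P xl2 Vl2
    by (auto simp: r l2inner_sub_left l2inner_scale_left vsub_in_l2 vscale_in_l2 subset_iff)
  have "k * l2inner x x = l2inner y x"
    using l2inner_self_eq_0_iff[OF xl2] by (cases "x = vzero") (auto simp: k_def l2inner_zero_right)
  moreover have "l2inner (proj V y) x = 0"
    using l2inner_commute[OF xl2 P(2)] xV P(1) by simp
  ultimately have rx: "l2inner (vsub y w) x = 0"
    using y P xl2 by (simp add: r l2inner_sub_left l2inner_scale_left vsub_in_l2 vscale_in_l2)
  show "\<forall>u\<in>ext_span V x. l2inner (vsub y w) u = 0"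
    using rV rx rl2 xl2 Vl2
    by (auto simp: ext_span_def l2inner_add_right l2inner_scale_right vscale_in_l2 subset_iff)
qed

lemma has_orth_proj_ext_span:
  assumes "has_orth_proj V" "x \<in> orth V"
  shows "has_orth_proj (ext_span V x)"
  using assms ext_span_orth_decomp[OF assms] lin_subspace_ext_span
  by (fastforce simp: has_orth_proj_def orth_def)

lemma proj_ext_span:
  assumes "has_orth_proj V" "x \<in> orth V" "y \<in> l2"
  shows "proj (ext_span V x) y = vadd (proj V y) (vscale (l2inner y x / l2inner x x) x)"
  using assms ext_span_orth_decomp[OF assms] has_orth_proj_ext_span[OF assms(1,2)]
  by (intro proj_eqI) (auto simp: has_orth_proj_def)

lemma ext_span_shift:
  assumes V: "lin_subspace V" and v: "v \<in> V"
  shows "ext_span V (vsub b v) = ext_span V b"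
proof -
  have "vadd u (vscale c (vsub b v)) = vadd (vsub u (vscale c v)) (vscale c b)"
    "vadd u (vscale c b) = vadd (vadd u (vscale c v)) (vscale c (vsub b v))" for u c
    by (simp_all add: vec_defs fun_eq_iff algebra_simps)
  moreover have "vsub u (vscale c v) \<in> V" "vadd u (vscale c v) \<in> V" if "u \<in> V" for u c
    using V v that lin_subspace_vsub by (auto simp: lin_subspace_def)
  ultimately show ?thesis unfolding ext_span_def by blast
qed

lemma has_orth_proj_fspan: "finite B \<Longrightarrow> B \<subseteq> l2 \<Longrightarrow> has_orth_proj (fspan B)"
proof (induction B rule: finite_induct)
  case empty
  show ?case
    using vzero_in_l2 l2inner_zero_right
    by (auto simp: has_orth_proj_def lin_subspace_def fspan_empty vec_defs)
next
  case (insert b B)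
  let ?V = "fspan B"
  have V: "has_orth_proj ?V" and b: "b \<in> l2" using insert by auto
  have "vsub b (proj ?V b) \<in> orth ?V"
    using proj_orth[OF V b] proj_in[OF V b] has_orth_proj_l2[OF V] b
    by (auto simp: orth_def vsub_in_l2)
  moreover have "fspan (insert b B) = ext_span ?V (vsub b (proj ?V b))"
    using V b proj_in[OF V b] insert.hyps
    by (simp add: fspan_insert ext_span_shift has_orth_proj_def)
  ultimately show ?case using V by (simp add: has_orth_proj_ext_span)
qed

section \<open>Block triangular compressions\<close>

lemma ext_span_coeff:
  assumes "V \<subseteq> l2" "x \<in> orth V" "l2inner x x = 1" "v \<in> V"
  shows "l2inner (vadd v (vscale c x)) x = c"
proof -
  have "v \<in> l2" "x \<in> l2" using assms by (auto simp: orth_def)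
  moreover from this have "l2inner v x = 0"
    using assms l2inner_commute[of x v] by (simp add: orth_def)
  ultimately show ?thesis using assms(3) by (simp add: l2inner_add_left l2inner_scale_left vscale_in_l2)
qed

lemma ext_span_decomp_unique:
  assumes "V \<subseteq> l2" "x \<in> orth V" "l2inner x x = 1" "v \<in> V" "v' \<in> V"
    and eq: "vadd v (vscale c x) = vadd v' (vscale c' x)"
  shows "c = c' \<and> v = v'"
proof -
  have "c = c'" using ext_span_coeff[OF assms(1-4), of c] ext_span_coeff[OF assms(1-3,5), of c'] eq
    by simp
  with eq show ?thesis by (simp add: vec_defs fun_eq_iff)
qed

lemma block_form_compress:
  assumes T: "lin_op D T" and V: "has_orth_proj V" "V \<subseteq> D"
    and x: "x \<in> D" "x \<in> orth V" "x \<in> orth (T ` V)" "l2inner x x = 1"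
  shows "block_form T V x (l2inner (T x) x) (\<lambda>y. proj V (T y))"
  unfolding block_form_def
proof (intro conjI ballI allI)
  have xl2: "x \<in> l2" using x by (simp add: orth_def)
  have span_D: "y \<in> D" if "y \<in> fspan {x}" for y
    using that x(1) lin_op_dom[OF T] by (auto simp: fspan_singleton lin_subspace_def)
  note Tl2 = lin_op_in_l2[OF T]
  fix y assume y: "y \<in> fspan {x}"
  show "proj V (T y) \<in> V" using proj_in[OF V(1)] Tl2 span_D y by blast
  show "proj V (T (vscale c y)) = vscale c (proj V (T y))" for c
    using y span_D Tl2 by (simp add: lin_op_scale[OF T] proj_scale[OF V(1)])
  show "proj V (T (vadd y z)) = vadd (proj V (T y)) (proj V (T z))" if "z \<in> fspan {x}" for z
    using y that span_D Tl2 by (simp add: lin_op_add[OF T] proj_add[OF V(1)])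
  fix v assume v: "v \<in> V"
  obtain c where yc: "y = vscale c x" using y by (auto simp: fspan_singleton)
  have vD: "v \<in> D" and yD: "y \<in> D" using v V(2) span_D y by auto
  have "l2inner (T v) x = 0"
    using l2inner_commute[OF xl2 Tl2[OF vD]] x(3) v by (simp add: orth_def)
  then have coeff: "l2inner (vadd (T v) (T y)) x / l2inner x x = c * l2inner (T x) x"
    using x(4) xl2 Tl2[OF vD] Tl2[OF x(1)]
    by (simp add: yc lin_op_scale[OF T x(1)] l2inner_add_left l2inner_scale_left vscale_in_l2)
  have "compress T (ext_span V x) (vadd v y)
      = vadd (proj V (vadd (T v) (T y))) (vscale (c * l2inner (T x) x) x)"
    using proj_ext_span[OF V(1) x(2)] vD yD Tl2
    by (simp add: compress_def lin_op_add[OF T] vadd_in_l2 coeff)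
  also have "proj V (vadd (T v) (T y)) = vadd (compress T V v) (proj V (T y))"
    using proj_add[OF V(1) Tl2[OF vD] Tl2[OF yD]] by (simp add: compress_def)
  finally show "compress T (ext_span V x) (vadd v y)
      = vadd (vadd (compress T V v) (proj V (T y))) (vscale (l2inner (T x) x) y)"
    by (simp add: yc vec_defs fun_eq_iff algebra_simps)
qed

lemma block_form_cong:
  assumes "\<forall>y\<in>fspan {x}. A y = A' y"
  shows "block_form T V x \<mu> A = block_form T V x \<mu> A'"
proof -
  have "vadd y z \<in> fspan {x}" "vscale c y \<in> fspan {x}"
    if "y \<in> fspan {x}" "z \<in> fspan {x}" for y z c
  proof -
    have "vadd (vscale a x) (vscale b x) = vscale (a + b) x" "vscale c (vscale a x) = vscale (c * a) x"
      for a b by (simp_all add: vec_defs fun_eq_iff algebra_simps)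
    with that show "vadd y z \<in> fspan {x}" "vscale c y \<in> fspan {x}" by (auto simp: fspan_singleton)
  qed
  with assms show ?thesis by (auto simp: block_form_def)
qed

locale block_triangular =
  fixes V :: "vec set" and x :: vec and L LV :: "vec \<Rightarrow> vec"
    and a :: "complex \<Rightarrow> vec" and \<nu> :: complex
  assumes subspace: "lin_subspace V" and x_orth: "x \<in> orth V" and x_unit: "l2inner x x = 1"
    and LV_into: "\<forall>v\<in>V. LV v \<in> V" and a_into: "\<forall>c. a c \<in> V" and a_0: "a 0 = vzero"
    and L_block: "\<forall>v\<in>V. \<forall>c. L (vadd v (vscale c x)) = vadd (vadd (LV v) (a c)) (vscale (c * \<nu>) x)"
begin

lemma decomp_unique:
  "v \<in> V \<Longrightarrow> v' \<in> V \<Longrightarrow> vadd v (vscale c x) = vadd v' (vscale c' x) \<Longrightarrow> c = c' \<and> v = v'"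
  using subspace x_orth x_unit by (intro ext_span_decomp_unique) (auto simp: lin_subspace_def)

lemma in_ext_span: "v \<in> V \<Longrightarrow> vadd v (vscale c x) \<in> ext_span V x"
  by (auto simp: ext_span_def)

lemma V_subset: "V \<subseteq> ext_span V x"
  using in_ext_span[of _ 0] by auto

lemma LV_a_in: "v \<in> V \<Longrightarrow> vadd (LV v) (a c) \<in> V"
  using subspace LV_into a_into by (simp add: lin_subspace_def)

lemma L_on_V:
  assumes "v \<in> V" shows "L v = LV v"
proof -
  have "L (vadd v (vscale 0 x)) = vadd (vadd (LV v) (a 0)) (vscale (0 * \<nu>) x)"
    using L_block assms by blast
  then show ?thesis using a_0 by simp
qed

lemma bij_imp_blocks_bij:
  assumes bij: "bij_betw L (ext_span V x) (ext_span V x)"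
  shows "bij_betw LV V V \<and> \<nu> \<noteq> 0"
proof -
  have L: "inj_on L (ext_span V x)" "L ` ext_span V x = ext_span V x"
    using bij by (auto simp: bij_betw_def)
  have preimage: "\<exists>v\<in>V. \<exists>c. vadd (vadd (LV v) (a c)) (vscale (c * \<nu>) x) = y"
    if "y \<in> ext_span V x" for y
  proof -
    have "y \<in> L ` ext_span V x" using that L(2) by simp
    then obtain w where "w \<in> ext_span V x" "L w = y" by blast
    then obtain v c where "v \<in> V" "L (vadd v (vscale c x)) = y" by (auto simp: ext_span_def)
    then show ?thesis using L_block by auto
  qed
  have z: "vzero \<in> V" using subspace by (simp add: lin_subspace_def)
  have "\<nu> \<noteq> 0"
  proof
    assume "\<nu> = 0"
    obtain v c where "v \<in> V" "vadd (vadd (LV v) (a c)) (vscale (c * \<nu>) x) = vadd vzero (vscale 1 x)"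
      using preimage in_ext_span[OF z] by blast
    then have "c * \<nu> = 1" using decomp_unique[OF LV_a_in z] by blast
    with \<open>\<nu> = 0\<close> show False by simp
  qed
  moreover have "inj_on LV V"
  proof (rule inj_onI)
    fix v v' assume v: "v \<in> V" "v' \<in> V" and "LV v = LV v'"
    then have "L v = L v'" by (simp add: L_on_V)
    then show "v = v'" using inj_onD[OF L(1)] V_subset v by blast
  qed
  moreover have "V \<subseteq> LV ` V"
  proof
    fix u assume u: "u \<in> V"
    obtain v c where v: "v \<in> V" and "vadd (vadd (LV v) (a c)) (vscale (c * \<nu>) x) = u"
      using preimage[OF subsetD[OF V_subset u]] by blast
    then have "vadd (vadd (LV v) (a c)) (vscale (c * \<nu>) x) = vadd u (vscale 0 x)" by simp
    then have "c * \<nu> = 0" "vadd (LV v) (a c) = u" using decomp_unique[OF LV_a_in[OF v] u] by blast+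
    then show "u \<in> LV ` V" using v \<open>\<nu> \<noteq> 0\<close> a_0 by auto
  qed
  ultimately show ?thesis using LV_into by (auto simp: bij_betw_def)
qed

lemma bij_if_blocks_bij:
  assumes LV: "bij_betw LV V V" and \<nu>: "\<nu> \<noteq> 0"
  shows "bij_betw L (ext_span V x) (ext_span V x)"
  unfolding bij_betw_def
proof (intro conjI subset_antisym)
  show "inj_on L (ext_span V x)"
  proof (rule inj_onI)
    fix w1 w2 assume "w1 \<in> ext_span V x" "w2 \<in> ext_span V x" and eq: "L w1 = L w2"
    then obtain v1 c1 v2 c2 where v: "v1 \<in> V" "v2 \<in> V"
      and w: "w1 = vadd v1 (vscale c1 x)" "w2 = vadd v2 (vscale c2 x)"
      unfolding ext_span_def by blast
    have "vadd (vadd (LV v1) (a c1)) (vscale (c1 * \<nu>) x) = vadd (vadd (LV v2) (a c2)) (vscale (c2 * \<nu>) x)"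
      using eq v L_block by (simp add: w)
    then have "c1 * \<nu> = c2 * \<nu>" and LV_eq: "vadd (LV v1) (a c1) = vadd (LV v2) (a c2)"
      using decomp_unique[OF LV_a_in[OF v(1)] LV_a_in[OF v(2)]] by blast+
    then have "c1 = c2" using \<nu> by simp
    with LV_eq have "LV v1 = LV v2" by (simp add: vec_defs fun_eq_iff)
    with \<open>c1 = c2\<close> show "w1 = w2" using LV v by (auto simp: w bij_betw_def inj_on_def)
  qed
  show "L ` ext_span V x \<subseteq> ext_span V x"
  proof (rule image_subsetI)
    fix w assume "w \<in> ext_span V x"
    then obtain v c where "v \<in> V" "w = vadd v (vscale c x)" by (auto simp: ext_span_def)
    then show "L w \<in> ext_span V x" using L_block LV_a_in in_ext_span by simp
  qed
  show "ext_span V x \<subseteq> L ` ext_span V x"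
  proof
    fix y assume "y \<in> ext_span V x"
    then obtain u d where u: "u \<in> V" and y: "y = vadd u (vscale d x)"
      unfolding ext_span_def by blast
    define c where "c = d / \<nu>"
    have "vsub u (a c) \<in> V" using subspace u a_into lin_subspace_vsub by blast
    then have "vsub u (a c) \<in> LV ` V" using LV by (simp add: bij_betw_def)
    then obtain v where v: "v \<in> V" "LV v = vsub u (a c)" by (metis imageE)
    have "L (vadd v (vscale c x)) = vadd (vadd (LV v) (a c)) (vscale (c * \<nu>) x)"
      using L_block v(1) by simp
    also have "\<dots> = y" using v(2) \<nu> by (simp add: y c_def vec_defs fun_eq_iff)
    finally show "y \<in> L ` ext_span V x" using in_ext_span[OF v(1)] by blast
  qed
qed

lemma bij_iff: "bij_betw L (ext_span V x) (ext_span V x) \<longleftrightarrow> bij_betw LV V V \<and> \<nu> \<noteq> 0"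
  using bij_imp_blocks_bij bij_if_blocks_bij by blast

end

lemma fd_spectrum_block_form:
  assumes T: "lin_op D T" and V: "has_orth_proj V" "V \<subseteq> D"
    and x: "x \<in> orth V" "l2inner x x = 1" and blk: "block_form T V x \<mu> A"
  shows "fd_spectrum (ext_span V x) (compress T (ext_span V x)) = fd_spectrum V (compress T V) \<union> {\<mu>}"
proof -
  have span: "vscale c x \<in> fspan {x}" for c by (auto simp: fspan_singleton)
  have sub: "lin_subspace V" using V(1) by (simp add: has_orth_proj_def)
  have block: "block_triangular V x (\<lambda>w. vsub (compress T (ext_span V x) w) (vscale l w))
      (\<lambda>v. vsub (compress T V v) (vscale l v)) (\<lambda>c. A (vscale c x)) (\<mu> - l)" for l
  proof
    show "lin_subspace V" "x \<in> orth V" "l2inner x x = 1" by (fact sub x)+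
    show "\<forall>v\<in>V. vsub (compress T V v) (vscale l v) \<in> V"
      using V lin_op_in_l2[OF T] proj_in[OF V(1)] lin_subspace_vsub[OF sub] sub
      by (auto simp: compress_def lin_subspace_def)
    show "\<forall>c. A (vscale c x) \<in> V" using blk span by (simp add: block_form_def)
    have "x \<in> fspan {x}" using fspan_superset by blast
    with blk have "A (vscale 0 x) = vscale 0 (A x)" unfolding block_form_def by blast
    then show "A (vscale 0 x) = vzero" by (simp add: vec_defs)
    show "\<forall>v\<in>V. \<forall>c. vsub (compress T (ext_span V x) (vadd v (vscale c x))) (vscale l (vadd v (vscale c x)))
        = vadd (vadd (vsub (compress T V v) (vscale l v)) (A (vscale c x))) (vscale (c * (\<mu> - l)) x)"
    proof (intro ballI allI)
      fix v c assume "v \<in> V"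
      with blk span have "compress T (ext_span V x) (vadd v (vscale c x))
          = vadd (vadd (compress T V v) (A (vscale c x))) (vscale \<mu> (vscale c x))"
        unfolding block_form_def by blast
      then show "vsub (compress T (ext_span V x) (vadd v (vscale c x))) (vscale l (vadd v (vscale c x)))
          = vadd (vadd (vsub (compress T V v) (vscale l v)) (A (vscale c x))) (vscale (c * (\<mu> - l)) x)"
        by (simp add: vec_defs fun_eq_iff algebra_simps)
    qed
  qed
  show ?thesis
  proof (rule set_eqI)
    fix l
    show "l \<in> fd_spectrum (ext_span V x) (compress T (ext_span V x))
        \<longleftrightarrow> l \<in> fd_spectrum V (compress T V) \<union> {\<mu>}"
      using block_triangular.bij_iff[OF block[of l]] by (auto simp: fd_spectrum_def)
  qed
qed

section \<open>Convexity of the numerical range\<close>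

lemma l2inner_vscale_both:
  "x \<in> l2 \<Longrightarrow> y \<in> l2 \<Longrightarrow> l2inner (vscale c x) (vscale c y) = c * cnj c * l2inner x y"
  by (simp add: l2inner_scale_left l2inner_scale_right vscale_in_l2)

definition segment_path :: "vec \<Rightarrow> vec \<Rightarrow> complex \<Rightarrow> real \<Rightarrow> vec" where
  "segment_path x y \<omega> t = vadd (vscale (of_real (1 - t)) x) (vscale (of_real t * \<omega>) y)"

lemma segment_path_in_subspace: "lin_subspace M \<Longrightarrow> x \<in> M \<Longrightarrow> y \<in> M \<Longrightarrow> segment_path x y \<omega> t \<in> M"
  by (simp add: segment_path_def lin_subspace_def)

lemma lin_op_segment_path:
  "lin_op D T \<Longrightarrow> x \<in> D \<Longrightarrow> y \<in> D \<Longrightarrow> T (segment_path x y \<omega> t) = segment_path (T x) (T y) \<omega> t"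
  using lin_op_dom[of D T]
  by (simp add: segment_path_def lin_op_add lin_op_scale lin_subspace_def)

lemma l2inner_segment_path:
  assumes "p \<in> l2" "q \<in> l2" "u \<in> l2" "w \<in> l2" and \<omega>: "cnj \<omega> * \<omega> = 1"
  shows "l2inner (segment_path p q \<omega> t) (segment_path u w \<omega> t)
    = of_real ((1 - t)\<^sup>2) * l2inner p u + of_real (t * (1 - t)) * (cnj \<omega> * l2inner p w + \<omega> * l2inner q u)
      + of_real (t\<^sup>2) * l2inner q w"
proof -
  have "\<omega> * cnj \<omega> = 1" using \<omega> by (simp add: mult.commute)
  then show ?thesis
    using assms(1-4)
    by (simp add: segment_path_def l2inner_add_left l2inner_add_right l2inner_scale_left
        l2inner_scale_right vscale_in_l2 vadd_in_l2 power2_eq_square algebra_simps)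
qed

lemma l2inner_segment_path_self:
  assumes "x \<in> l2" "y \<in> l2" "l2inner x x = 1" "l2inner y y = 1" "cnj \<omega> * \<omega> = 1"
  shows "l2inner (segment_path x y \<omega> t) (segment_path x y \<omega> t)
    = of_real ((1 - t)\<^sup>2 + t * (1 - t) * (2 * Re (cnj \<omega> * l2inner x y)) + t\<^sup>2)"
proof -
  have "cnj \<omega> * l2inner x y + \<omega> * l2inner y x = of_real (2 * Re (cnj \<omega> * l2inner x y))"
    using l2inner_commute[OF assms(1,2)] by (simp add: complex_eq_iff)
  then show ?thesis using assms by (simp add: l2inner_segment_path)
qed

lemma quadratic_form_segment_path:
  fixes T :: "vec \<Rightarrow> vec" and x y :: vec and k t :: real
  defines "a \<equiv> l2inner (T x) x" and "b \<equiv> l2inner (T y) y"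
  assumes T: "lin_op D T" and D: "x \<in> D" "y \<in> D" and unit: "l2inner x x = 1" "l2inner y y = 1"
    and \<omega>: "cnj \<omega> * \<omega> = 1"
    and k: "cnj \<omega> * (l2inner (T x) y - a * l2inner x y) + \<omega> * (l2inner (T y) x - a * l2inner y x)
      = (b - a) * of_real k"
  shows "l2inner (T (segment_path x y \<omega> t)) (segment_path x y \<omega> t)
      - a * l2inner (segment_path x y \<omega> t) (segment_path x y \<omega> t) = (b - a) * of_real (t\<^sup>2 + t * (1 - t) * k)"
proof -
  have l2: "x \<in> l2" "y \<in> l2" "T x \<in> l2" "T y \<in> l2"
    using D lin_op_in_l2[OF T] lin_op_dom[OF T] by (auto simp: lin_subspace_def)
  have "l2inner (T (segment_path x y \<omega> t)) (segment_path x y \<omega> t)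
      - a * l2inner (segment_path x y \<omega> t) (segment_path x y \<omega> t)
    = of_real (t * (1 - t)) * (cnj \<omega> * (l2inner (T x) y - a * l2inner x y) + \<omega> * (l2inner (T y) x - a * l2inner y x))
      + of_real (t\<^sup>2) * (b - a)"
    using D unit
    by (simp add: a_def b_def lin_op_segment_path[OF T] l2inner_segment_path[OF _ _ _ _ \<omega>] l2 algebra_simps)
  also have "\<dots> = (b - a) * of_real (t\<^sup>2 + t * (1 - t) * k)"
    unfolding k by (simp add: algebra_simps)
  finally show ?thesis .
qed

lemma exists_unimodular_real:
  "\<exists>\<omega>. cnj \<omega> * \<omega> = 1 \<and> Im (cnj \<omega> * p + \<omega> * q) = 0"
proof (cases "p = cnj q")
  case True
  then show ?thesis by (intro exI[of _ 1]) simp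
next
  case False
  define d where "d = p - cnj q"
  define \<omega> where "\<omega> = d / of_real (cmod d)"
  have d: "cmod d \<noteq> 0" using False by (simp add: d_def)
  have "cnj \<omega> * \<omega> = 1" and "cnj \<omega> * d = of_real (cmod d)"
    using d complex_norm_square[of d] by (simp_all add: \<omega>_def power2_eq_square field_simps)
  moreover have "Im (cnj \<omega> * p + \<omega> * q) = Im (cnj \<omega> * d)"
    by (simp add: d_def algebra_simps)
  ultimately show ?thesis by auto
qed

lemma exists_unimodular_real_multiple:
  assumes "d \<noteq> 0"
  shows "\<exists>\<omega> k. cnj \<omega> * \<omega> = 1 \<and> cnj \<omega> * p + \<omega> * q = d * of_real k"
proof -
  obtain \<omega> where \<omega>: "cnj \<omega> * \<omega> = 1" "Im (cnj \<omega> * (p / d) + \<omega> * (q / d)) = 0"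
    using exists_unimodular_real by blast
  then have "cnj \<omega> * (p / d) + \<omega> * (q / d) = of_real (Re (cnj \<omega> * (p / d) + \<omega> * (q / d)))"
    by (simp add: complex_eq_iff)
  then have "cnj \<omega> * p + \<omega> * q = d * of_real (Re (cnj \<omega> * (p / d) + \<omega> * (q / d)))"
    using assms by (simp add: field_simps)
  with \<omega>(1) show ?thesis by blast
qed

lemma rayleigh_quotient_in_numrange:
  assumes T: "lin_op D T" and M: "lin_subspace M" "M \<subseteq> D" and z: "z \<in> M" "z \<noteq> vzero"
  shows "l2inner (T z) z / l2inner z z \<in> numrange T M"
proof -
  have zl2: "z \<in> l2" and zD: "z \<in> D" using M z by (auto simp: lin_subspace_def)
  define c where "c = complex_of_real (1 / l2norm z)"
  define w where "w = vscale c z"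
  have zz: "l2inner z z \<noteq> 0" using zl2 z(2) by (simp add: l2inner_self_eq_0_iff)
  then have cc: "c * cnj c = 1 / l2inner z z"
    using l2inner_self[OF zl2] by (simp add: c_def power2_eq_square)
  have "w \<in> M" using M(1) z(1) by (simp add: w_def lin_subspace_def)
  moreover have "l2norm w = 1"
    using zl2 zz cc by (simp add: w_def l2norm_eq_1_iff vscale_in_l2 l2inner_vscale_both)
  moreover have "l2inner (T w) w = l2inner (T z) z / l2inner z z"
    using zl2 zD cc lin_op_in_l2[OF T zD] by (simp add: w_def lin_op_scale[OF T] l2inner_vscale_both)
  ultimately show ?thesis unfolding numrange_def by (auto intro!: exI[of _ w])
qed

lemma quadratic_form_parallel_eq:
  assumes T: "lin_op D T" and "x \<in> D" "y \<in> D" "l2inner x x = 1" "l2inner y y = 1"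
    and eq: "vscale \<alpha> x = vscale \<beta> y" and nz: "\<alpha> \<noteq> 0 \<or> \<beta> \<noteq> 0"
  shows "l2inner (T x) x = l2inner (T y) y"
proof -
  have l2: "x \<in> l2" "y \<in> l2" "T x \<in> l2" "T y \<in> l2"
    using assms lin_op_in_l2[OF T] lin_op_dom[OF T] by (auto simp: lin_subspace_def)
  have "\<alpha> * cnj \<alpha> = \<beta> * cnj \<beta>"
    using arg_cong2[OF eq eq, of l2inner] assms(4,5) l2 by (simp add: l2inner_vscale_both)
  moreover have "\<alpha> * cnj \<alpha> * l2inner (T x) x = \<beta> * cnj \<beta> * l2inner (T y) y"
    using arg_cong2[OF arg_cong[OF eq, of T] eq, of l2inner] assms(2,3) l2
    by (simp add: lin_op_scale[OF T] l2inner_vscale_both)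
  moreover have "\<alpha> * cnj \<alpha> \<noteq> 0 \<or> \<beta> * cnj \<beta> \<noteq> 0" using nz by simp
  ultimately show ?thesis by auto
qed

lemma segment_path_nonzero:
  assumes T: "lin_op D T" and xy: "x \<in> D" "y \<in> D" "l2inner x x = 1" "l2inner y y = 1"
    and ab: "l2inner (T x) x \<noteq> l2inner (T y) y" and \<omega>: "cnj \<omega> * \<omega> = 1" and t: "0 \<le> t" "t \<le> 1"
  shows "segment_path x y \<omega> t \<noteq> vzero"
proof
  assume "segment_path x y \<omega> t = vzero"
  then have "vscale (of_real (1 - t)) x = vscale (- (of_real t * \<omega>)) y"
    by (simp add: segment_path_def vec_defs fun_eq_iff eq_neg_iff_add_eq_0)
  moreover have "of_real (1 - t) \<noteq> (0::complex) \<or> - (of_real t * \<omega>) \<noteq> 0"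
    using \<omega> by auto
  ultimately show False using quadratic_form_parallel_eq[OF T xy] ab by blast
qed

lemma numrange_segment:
  assumes T: "lin_op D T" and M: "lin_subspace M" "M \<subseteq> D"
    and x: "x \<in> M" "l2norm x = 1" and y: "y \<in> M" "l2norm y = 1" and r: "0 \<le> r" "r \<le> 1"
  shows "(1 - r) *\<^sub>R l2inner (T x) x + r *\<^sub>R l2inner (T y) y \<in> numrange T M"
proof -
  have D: "x \<in> D" "y \<in> D" using x y M by auto
  have l2: "x \<in> l2" "y \<in> l2" using D lin_op_dom[OF T] by (auto simp: lin_subspace_def)
  have unit: "l2inner x x = 1" "l2inner y y = 1" using x y l2 by (simp_all add: l2norm_eq_1_iff)
  define a where "a = l2inner (T x) x"
  define b where "b = l2inner (T y) y"
  show ?thesis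
  proof (cases "a = b")
    case True
    then have "(1 - r) *\<^sub>R a + r *\<^sub>R b = a" by (simp add: scaleR_left_diff_distrib)
    then show ?thesis using x by (auto simp: a_def b_def numrange_def)
  next
    case False
    txt \<open>The unimodular factor makes l2inner (T z) z - a * l2inner z z a real multiple of b - a
      along the path z, so the Rayleigh quotient of z moves continuously along the segment
      from a to b.\<close>
    have "b - a \<noteq> 0" using False by simp
    then obtain \<omega> k where \<omega>: "cnj \<omega> * \<omega> = 1" and k:
      "cnj \<omega> * (l2inner (T x) y - a * l2inner x y) + \<omega> * (l2inner (T y) x - a * l2inner y x) = (b - a) * of_real k"
      using exists_unimodular_real_multiple by blast
    define z where "z = segment_path x y \<omega>"
    define n where "n t = (1 - t)\<^sup>2 + t * (1 - t) * (2 * Re (cnj \<omega> * l2inner x y)) + t\<^sup>2" for t :: real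
    define g where "g t = t\<^sup>2 + t * (1 - t) * k" for t :: real
    have N: "l2inner (z t) (z t) = of_real (n t)" for t
      using l2inner_segment_path_self[OF l2 unit \<omega>] by (simp add: z_def n_def)
    have Q: "l2inner (T (z t)) (z t) - a * l2inner (z t) (z t) = (b - a) * of_real (g t)" for t
      using quadratic_form_segment_path[OF T D unit \<omega> k[unfolded a_def b_def]]
      by (simp add: z_def g_def a_def b_def)
    have z_nz: "z t \<noteq> vzero" if "0 \<le> t" "t \<le> 1" for t
      using segment_path_nonzero[OF T D unit _ \<omega> that] False by (simp add: z_def a_def b_def)
    have n_nz: "n t \<noteq> 0" if "0 \<le> t" "t \<le> 1" for t
    proof -
      have "z t \<in> l2" using segment_path_in_subspace[OF lin_subspace_l2 l2] by (simp add: z_def)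
      then show ?thesis using z_nz[OF that] N[of t] l2inner_self_eq_0_iff[of "z t"] by simp
    qed
    have "continuous_on {0..1} (\<lambda>t. g t / n t)"
      using n_nz unfolding g_def n_def by (intro continuous_intros) auto
    moreover have "g 0 / n 0 = 0" "g 1 / n 1 = 1" by (simp_all add: g_def n_def)
    ultimately obtain t where t: "0 \<le> t" "t \<le> 1" "g t / n t = r"
      using IVT'[of "\<lambda>t. g t / n t" 0 r 1] r by auto
    have "l2inner (T (z t)) (z t) / l2inner (z t) (z t) = a + (b - a) * of_real (g t / n t)"
      using Q[of t] N[of t] n_nz[OF t(1,2)] by (simp add: field_simps)
    also have "\<dots> = (1 - r) *\<^sub>R a + r *\<^sub>R b"
      using t(3) by (simp add: scaleR_conv_of_real algebra_simps)
    finally show ?thesis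
      using rayleigh_quotient_in_numrange[OF T M _ z_nz[OF t(1,2)]] segment_path_in_subspace[OF M(1) x(1) y(1)]
      by (simp add: z_def a_def b_def)
  qed
qed

lemma numrange_convex:
  assumes "lin_op D T" "lin_subspace M" "M \<subseteq> D"
  shows "convex (numrange T M)"
  using numrange_segment[OF assms] by (auto simp: convex_alt numrange_def)

section \<open>The essential numerical range\<close>

lemma We1_approx:
  assumes "lam \<in> We1 D T" "finite C" "C \<subseteq> l2" "\<epsilon> > 0"
  shows "\<exists>x. x \<in> orth C \<inter> D \<and> l2norm x = 1 \<and> cmod (l2inner (T x) x - lam) < \<epsilon>"
proof -
  have "fin_dim_subspace (fspan C)" using assms(2,3) by (auto simp: fin_dim_subspace_def)
  then have "lam \<in> closure (numrange T (orth (fspan C) \<inter> D))" using assms(1) by (auto simp: We1_def)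
  then have "lam \<in> closure (numrange T (orth C \<inter> D))" by (simp add: orth_fspan assms(2,3))
  then obtain q where "q \<in> numrange T (orth C \<inter> D)" "dist q lam < \<epsilon>"
    using closure_approachable assms(4) by blast
  then show ?thesis by (auto simp: numrange_def dist_complex_def)
qed

lemma We1_interior:
  assumes T: "lin_op D T" and lam: "lam \<in> interior (We1 D T)" and C: "finite C" "C \<subseteq> l2"
  shows "\<exists>x. x \<in> orth C \<inter> D \<and> l2norm x = 1 \<and> l2inner (T x) x = lam"
proof -
  let ?M = "orth C \<inter> D"
  have "fin_dim_subspace (fspan C)" using C by (auto simp: fin_dim_subspace_def)
  then have "We1 D T \<subseteq> closure (numrange T (orth (fspan C) \<inter> D))" by (auto simp: We1_def)
  then have "We1 D T \<subseteq> closure (numrange T ?M)" by (simp add: orth_fspan C)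
  moreover have "convex (numrange T ?M)"
    using T C by (intro numrange_convex lin_subspace_Int lin_subspace_orth lin_op_dom) auto
  ultimately have "lam \<in> interior (numrange T ?M)"
    using lam interior_mono convex_interior_closure by blast
  then have "lam \<in> numrange T ?M" using interior_subset by blast
  then show ?thesis by (auto simp: numrange_def)
qed

definition block_extension ::
    "vec set \<Rightarrow> (vec \<Rightarrow> vec) \<Rightarrow> vec set \<Rightarrow> vec \<Rightarrow> complex \<Rightarrow> (vec \<Rightarrow> vec) \<Rightarrow> bool" where
  "block_extension D T V x \<mu> A \<longleftrightarrow> x \<in> orth V \<inter> D \<and> l2norm x = 1 \<and> block_form T V x \<mu> A \<and>
     fd_spectrum (ext_span V x) (compress T (ext_span V x)) = fd_spectrum V (compress T V) \<union> {\<mu>}"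

lemma generators_with_images:
  assumes T: "lin_op D T" and B: "finite B" "B \<subseteq> l2" "fspan B \<subseteq> D"
  shows "finite (B \<union> T ` B)" "B \<union> T ` B \<subseteq> l2"
  using B fspan_superset[OF B(1)] lin_op_in_l2[OF T] by auto

lemma block_extension_of_orth:
  assumes T: "lin_op D T" and B: "finite B" "B \<subseteq> l2" "fspan B \<subseteq> D"
    and x: "x \<in> orth (B \<union> T ` B) \<inter> D" "l2norm x = 1"
  shows "block_extension D T (fspan B) x (l2inner (T x) x) (\<lambda>y. proj (fspan B) (T y))"
proof -
  have TB: "finite (T ` B)" "T ` B \<subseteq> l2" using generators_with_images[OF T B] by auto
  have V: "has_orth_proj (fspan B)" using B(1,2) by (rule has_orth_proj_fspan)
  have unit: "l2inner x x = 1" using x by (simp add: l2norm_eq_1_iff orth_def)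
  have xV: "x \<in> orth (fspan B)"
    using x orth_antimono[of B "B \<union> T ` B"] by (auto simp: orth_fspan[OF B(1,2)])
  have "x \<in> orth (fspan (T ` B))"
    using x orth_antimono[of "T ` B" "B \<union> T ` B"] by (auto simp: orth_fspan[OF TB])
  then have "x \<in> orth (T ` fspan B)"
    using orth_antimono[OF image_fspan_subset[OF T B(1,3)]] by blast
  then have "block_form T (fspan B) x (l2inner (T x) x) (\<lambda>y. proj (fspan B) (T y))"
    using block_form_compress[OF T V B(3)] x xV unit by blast
  then show ?thesis
    using fd_spectrum_block_form[OF T V B(3) xV unit] x xV by (simp add: block_extension_def)
qed

lemma block_extension_vzero:
  assumes T: "lin_op D T" and V: "has_orth_proj V" and Tx: "T x \<in> orth V"
    and ext: "block_extension D T V x \<mu> (\<lambda>y. proj V (T y))"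
  shows "block_extension D T V x \<mu> (\<lambda>y. vzero)"
proof -
  have "proj V (T y) = vzero" if y: "y \<in> fspan {x}" for y
  proof -
    obtain c where "y = vscale c x" using y by (auto simp: fspan_singleton)
    then have "T y \<in> orth V"
      using ext Tx lin_subspace_orth[OF has_orth_proj_l2[OF V]]
      by (simp add: block_extension_def lin_op_scale[OF T] lin_subspace_def)
    then show ?thesis by (rule proj_eq_vzero[OF V])
  qed
  then have "block_form T V x \<mu> (\<lambda>y. proj V (T y)) = block_form T V x \<mu> (\<lambda>y. vzero)"
    by (intro block_form_cong) blast
  then show ?thesis using ext by (simp add: block_extension_def)
qed

lemma adj_dom_orth:
  assumes T: "lin_op D T" and B: "finite B" "B \<subseteq> adj_dom D T"
  shows "\<exists>Z. finite Z \<and> Z \<subseteq> l2 \<and> (\<forall>x\<in>orth Z \<inter> D. T x \<in> orth B)"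
proof -
  have "\<forall>b\<in>B. \<exists>z. z \<in> l2 \<and> (\<forall>y\<in>D. l2inner (T y) b = l2inner y z)"
    using B(2) by (auto simp: adj_dom_def)
  from bchoice[OF this] obtain Z
    where Z: "\<forall>b\<in>B. Z b \<in> l2 \<and> (\<forall>y\<in>D. l2inner (T y) b = l2inner y (Z b))"
    by blast
  have "T x \<in> orth B" if "x \<in> orth (Z ` B) \<inter> D" for x
    using that Z lin_op_in_l2[OF T] by (auto simp: orth_def)
  then show ?thesis using B(1) Z by blast
qed

lemma exists_block_extension_near:
  assumes T: "lin_op D T" and B: "finite B" "B \<subseteq> l2" "fspan B \<subseteq> D"
    and lam: "lam \<in> We1 D T" and \<epsilon>: "\<epsilon> > 0"
  shows "\<exists>x. block_extension D T (fspan B) x (l2inner (T x) x) (\<lambda>y. proj (fspan B) (T y)) \<and>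
    cmod (l2inner (T x) x - lam) < \<epsilon>"
proof -
  obtain x where "x \<in> orth (B \<union> T ` B) \<inter> D" "l2norm x = 1" "cmod (l2inner (T x) x - lam) < \<epsilon>"
    using We1_approx[OF lam generators_with_images[OF T B] \<epsilon>] by blast
  then show ?thesis using block_extension_of_orth[OF T B] by blast
qed

lemma exists_block_extension_near_vzero:
  assumes T: "lin_op D T" and B: "finite B" "B \<subseteq> l2" "fspan B \<subseteq> D" "B \<subseteq> adj_dom D T"
    and lam: "lam \<in> We1 D T" and \<epsilon>: "\<epsilon> > 0"
  shows "\<exists>x. block_extension D T (fspan B) x (l2inner (T x) x) (\<lambda>y. vzero) \<and>
    cmod (l2inner (T x) x - lam) < \<epsilon>"
proof -
  obtain Z where Z: "finite Z" "Z \<subseteq> l2" "\<forall>x\<in>orth Z \<inter> D. T x \<in> orth B"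
    using adj_dom_orth[OF T B(1,4)] by blast
  have C: "finite (B \<union> T ` B \<union> Z)" "B \<union> T ` B \<union> Z \<subseteq> l2"
    using generators_with_images[OF T B(1-3)] Z by auto
  obtain x where x: "x \<in> orth (B \<union> T ` B \<union> Z) \<inter> D" "l2norm x = 1" "cmod (l2inner (T x) x - lam) < \<epsilon>"
    using We1_approx[OF lam C \<epsilon>] by blast
  then have "x \<in> orth (B \<union> T ` B) \<inter> D" "T x \<in> orth (fspan B)"
    using Z(3) orth_antimono[of "B \<union> T ` B" "B \<union> T ` B \<union> Z"] orth_antimono[of Z "B \<union> T ` B \<union> Z"]
    by (auto simp: orth_fspan[OF B(1,2)])
  then show ?thesis
    using x block_extension_of_orth[OF T B(1-3)] has_orth_proj_fspan[OF B(1,2)]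
      block_extension_vzero[OF T] by blast
qed

lemma exists_block_extension_exact:
  assumes T: "lin_op D T" and B: "finite B" "B \<subseteq> l2" "fspan B \<subseteq> D"
    and lam: "lam \<in> interior (We1 D T)"
  shows "\<exists>x. block_extension D T (fspan B) x lam (\<lambda>y. proj (fspan B) (T y))"
proof -
  obtain x where "x \<in> orth (B \<union> T ` B) \<inter> D" "l2norm x = 1" "l2inner (T x) x = lam"
    using We1_interior[OF T lam generators_with_images[OF T B]] by blast
  then show ?thesis using block_extension_of_orth[OF T B] by metis
qed

theorem lemma6p6:
  fixes D :: "vec set" and T :: "vec \<Rightarrow> vec" and V :: "vec set"
    and lam :: complex and \<epsilon> :: real
  assumes "lin_op D T"
    and "fin_dim_subspace V" and "V \<subseteq> D"
    and "lam \<in> We1 D T" and "\<epsilon> > 0"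
  shows "(\<exists>x \<mu> A. x \<in> orth V \<inter> D \<and> l2norm x = 1 \<and> cmod (\<mu> - lam) < \<epsilon> \<and>
            block_form T V x \<mu> A \<and>
            fd_spectrum (ext_span V x) (compress T (ext_span V x))
              = fd_spectrum V (compress T V) \<union> {\<mu>})
     \<and> (dense_in_H D \<and> D \<subseteq> adj_dom D T \<longrightarrow>
         (\<exists>x \<mu>. x \<in> orth V \<inter> D \<and> l2norm x = 1 \<and> cmod (\<mu> - lam) < \<epsilon> \<and>
            block_form T V x \<mu> (\<lambda>y. vzero) \<and>
            fd_spectrum (ext_span V x) (compress T (ext_span V x))
              = fd_spectrum V (compress T V) \<union> {\<mu>}))
     \<and> (lam \<in> interior (We1 D T) \<longrightarrow>
         (\<exists>x A. x \<in> orth V \<inter> D \<and> l2norm x = 1 \<and>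
            block_form T V x lam A \<and>
            fd_spectrum (ext_span V x) (compress T (ext_span V x))
              = fd_spectrum V (compress T V) \<union> {lam}))"
proof -
  obtain B where B: "finite B" "B \<subseteq> l2" and V: "V = fspan B"
    using assms(2) by (auto simp: fin_dim_subspace_def)
  have VD: "fspan B \<subseteq> D" using assms(3) V by simp
  have "B \<subseteq> adj_dom D T" if "D \<subseteq> adj_dom D T"
    using that VD fspan_superset[OF B(1)] by blast
  then show ?thesis
    using exists_block_extension_near[OF assms(1) B VD assms(4,5)]
      exists_block_extension_near_vzero[OF assms(1) B VD _ assms(4,5)]
      exists_block_extension_exact[OF assms(1) B VD]
    unfolding V block_extension_def by blast
qed

end
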